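(* Let $n\ge 2$ and let $\mathcal{A}=\langle Q,\Sigma,\delta\rangle$ be an $n$-state DFA that has a letter of rank $n-1$ and such that the group $P$ generated by the permutation letters of $\Sigma$ acts $2$-transitively on $Q$. Then $\mathcal{A}$ is synchronizing and its reset threshold is at most $2n^2-6n+5$.
   Context: Words act on states letter by letter from left to right. A letter $x$ has rank $n-1$ if $|Q\cdot x|=n-1$; a permutation letter is one acting bijectively on $Q$. A permutation group $P$ on $Q$ is 2-transitive if it acts transitively on ordered pairs of distinct elements of $Q$. The reset threshold is the minimum length of a word $w$ with $|Q\cdot w|=1$. *)

theory Defs
  imports "HOL-Library.FuncSet"
begin

definition dfa :: "'q set \<Rightarrow> 'a set \<Rightarrow> ('q \<Rightarrow> 'a \<Rightarrow> 'q) \<Rightarrow> bool" where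
  "dfa Q Sig delta \<longleftrightarrow> finite Q \<and> Q \<noteq> {} \<and> finite Sig \<and>
     (\<forall>q\<in>Q. \<forall>x\<in>Sig. delta q x \<in> Q)"

definition delta_word :: "('q \<Rightarrow> 'a \<Rightarrow> 'q) \<Rightarrow> 'q \<Rightarrow> 'a list \<Rightarrow> 'q" where
  "delta_word delta q w = foldl delta q w"

definition image_word :: "('q \<Rightarrow> 'a \<Rightarrow> 'q) \<Rightarrow> 'q set \<Rightarrow> 'a list \<Rightarrow> 'q set" where
  "image_word delta S w = (\<lambda>q. delta_word delta q w) ` S"

definition letter_rank :: "'q set \<Rightarrow> ('q \<Rightarrow> 'a \<Rightarrow> 'q) \<Rightarrow> 'a \<Rightarrow> nat" where
  "letter_rank Q delta x = card ((\<lambda>q. delta q x) ` Q)"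

definition permutation_letter :: "'q set \<Rightarrow> ('q \<Rightarrow> 'a \<Rightarrow> 'q) \<Rightarrow> 'a \<Rightarrow> bool" where
  "permutation_letter Q delta x \<longleftrightarrow> bij_betw (\<lambda>q. delta q x) Q Q"

text \<open>The permutation group on Q generated by the permutation letters; permutations
are represented as extensional functions on Q (value undefined outside Q).\<close>
inductive_set perm_group_gen :: "'q set \<Rightarrow> 'a set \<Rightarrow> ('q \<Rightarrow> 'a \<Rightarrow> 'q) \<Rightarrow> ('q \<Rightarrow> 'q) set"
  for Q Sig delta where
  gen_id: "restrict id Q \<in> perm_group_gen Q Sig delta"
| gen_mult: "\<lbrakk> g \<in> perm_group_gen Q Sig delta; x \<in> Sig; permutation_letter Q delta x \<rbrakk>
     \<Longrightarrow> restrict (\<lambda>q. delta (g q) x) Q \<in> perm_group_gen Q Sig delta"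
| gen_inv: "\<lbrakk> g \<in> perm_group_gen Q Sig delta; x \<in> Sig; permutation_letter Q delta x \<rbrakk>
     \<Longrightarrow> restrict (\<lambda>q. the_inv_into Q (\<lambda>p. delta p x) (g q)) Q \<in> perm_group_gen Q Sig delta"

definition two_transitive :: "'q set \<Rightarrow> ('q \<Rightarrow> 'q) set \<Rightarrow> bool" where
  "two_transitive Q P \<longleftrightarrow>
     (\<forall>p\<in>Q. \<forall>q\<in>Q. \<forall>p'\<in>Q. \<forall>q'\<in>Q. p \<noteq> q \<longrightarrow> p' \<noteq> q' \<longrightarrow>
        (\<exists>g\<in>P. g p = p' \<and> g q = q'))"

definition synchronizing :: "'q set \<Rightarrow> 'a set \<Rightarrow> ('q \<Rightarrow> 'a \<Rightarrow> 'q) \<Rightarrow> bool" where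
  "synchronizing Q Sig delta \<longleftrightarrow> (\<exists>w. set w \<subseteq> Sig \<and> card (image_word delta Q w) = 1)"

definition reset_threshold :: "'q set \<Rightarrow> 'a set \<Rightarrow> ('q \<Rightarrow> 'a \<Rightarrow> 'q) \<Rightarrow> nat" where
  "reset_threshold Q Sig delta =
     (LEAST l. \<exists>w. set w \<subseteq> Sig \<and> length w = l \<and> card (image_word delta Q w) = 1)"

end

theory Submission
  imports Defs
begin

text \<open>Let the letter \<open>a\<close> of rank \<open>n - 1\<close> merge two states into \<open>x\<close> and miss the state \<open>y\<close>.
If \<open>T\<close> contains \<open>x\<close> but not \<open>y\<close>, then the preimage of \<open>T\<close> under \<open>a\<close> is larger than \<open>T\<close>.
So it suffices to find, for every proper nonempty \<open>T\<close>, a permutation word \<open>h\<close> with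
\<open>|h| \<le> 2n - 3\<close>, \<open>x\<cdot>h \<in> T\<close> and \<open>y\<cdot>h \<notin> T\<close>; this holds as soon as the graph with edges
\<open>y\<cdot>h \<rightarrow> x\<cdot>h\<close>, \<open>|h| \<le> 2n - 3\<close>, is strongly connected. After \<open>n - 1\<close> steps every state is of
the form \<open>x\<cdot>h\<close>, so every state has an incoming edge and there is a cycle. From then on,
as long as the graph is not strongly connected, each length increment merges two strongly
connected components: otherwise mutual reachability would be invariant under the
2-transitive group, hence total. Starting from \<open>{x}\<close>, whose preimage under \<open>a\<close> has two
states, \<open>n - 2\<close> extensions of length at most \<open>2n - 2\<close> give a reset word of length
\<open>1 + (n - 2)(2n - 2) = 2n\<^sup>2 - 6n + 5\<close>.\<close>

lemma delta_word_Nil [simp]: "delta_word delta q [] = q"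
  by (simp add: delta_word_def)

lemma delta_word_Cons [simp]: "delta_word delta q (s # w) = delta_word delta (delta q s) w"
  by (simp add: delta_word_def)

lemma delta_word_append: "delta_word delta q (u @ v) = delta_word delta (delta_word delta q u) v"
  by (simp add: delta_word_def)

lemma delta_word_snoc: "delta_word delta q (w @ [s]) = delta (delta_word delta q w) s"
  by (simp add: delta_word_def)

definition preimage_word :: "'q set \<Rightarrow> ('q \<Rightarrow> 'a \<Rightarrow> 'q) \<Rightarrow> 'a list \<Rightarrow> 'q set \<Rightarrow> 'q set" where
  "preimage_word Q delta w S = {q \<in> Q. delta_word delta q w \<in> S}"

lemma preimage_word_append:
  "(\<And>q. q \<in> Q \<Longrightarrow> delta_word delta q u \<in> Q) \<Longrightarrow>
   preimage_word Q delta (u @ v) S = preimage_word Q delta u (preimage_word Q delta v S)"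
  by (auto simp: preimage_word_def delta_word_append)


lemma inj_endo_reflects_membership:
  assumes "finite R" "R \<subseteq> A" "inj_on F A" "F ` R \<subseteq> R" "a \<in> A" "F a \<in> R"
  shows "a \<in> R"
proof -
  have "F ` R = R"
    using assms by (meson endo_inj_surj inj_on_subset)
  then obtain b where "b \<in> R" "F b = F a"
    using \<open>F a \<in> R\<close> by (metis imageE)
  then show ?thesis
    using assms inj_on_def by (metis subsetD)
qed

lemma card_vimage_bij_betw:
  assumes "bij_betw g A A" "T \<subseteq> A"
  shows "card {a \<in> A. g a \<in> T} = card T"
proof -
  have "g ` {a \<in> A. g a \<in> T} = T"
    using assms by (auto simp: bij_betw_def)
  then have "bij_betw g {a \<in> A. g a \<in> T} T"
    by (intro bij_betw_subset[OF assms(1)]) auto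
  then show ?thesis
    by (rule bij_betw_same_card)
qed

lemma card_less_card_vimage_if_collision:
  assumes "finite A" "T \<subseteq> f ` A" "p \<in> A" "q \<in> A" "p \<noteq> q" "f p = f q" "f p \<in> T"
  shows "card T < card {a \<in> A. f a \<in> T}"
proof -
  let ?B = "{a \<in> A. f a \<in> T}"
  have "f ` ?B = T"
    using assms(2) by auto
  moreover have "\<not> inj_on f ?B"
    using assms(3-7) unfolding inj_on_def by auto
  moreover have "finite ?B"
    using assms(1) by simp
  ultimately show ?thesis
    by (metis card_image_le inj_on_iff_eq_card le_neq_implies_less)
qed

lemma card_quotient_less_if_refines:
  assumes "finite A" "equiv A R" "equiv A S" "R \<subset> S"
  shows "card (A // S) < card (A // R)"
proof -
  let ?F = "\<lambda>X. S `` X"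
  obtain a b where ab: "(a, b) \<in> S" "(a, b) \<notin> R"
    using assms(4) by auto
  then have "a \<in> A" "b \<in> A"
    using assms(3) by (auto simp: equiv_def refl_on_def)
  then have classes: "R `` {a} \<in> A // R" "R `` {b} \<in> A // R" "R `` {a} \<noteq> R `` {b}"
    using ab assms(2) by (auto intro: quotientI simp: eq_equiv_class_iff)
  have "R \<subseteq> S"
    using assms(4) by blast
  then have "?F (R `` {a}) = S `` {a}" "?F (R `` {b}) = S `` {b}"
    using refines_equiv_class_eq2 assms(2,3) by metis+
  moreover have "S `` {a} = S `` {b}"
    using ab(1) assms(3) by (simp add: equiv_class_eq)
  ultimately have "\<not> inj_on ?F (A // R)"
    using classes unfolding inj_on_def by metis
  moreover have "finite (A // R)"
    using assms(1,2) by (simp add: finite_quotient equiv_def)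
  ultimately have "card (?F ` (A // R)) < card (A // R)"
    by (metis card_image_le inj_on_iff_eq_card le_neq_implies_less)
  then show ?thesis
    using assms(2-4) by (simp add: refines_equiv_image_eq)
qed

lemma card_quotient_Id_on: "finite A \<Longrightarrow> card (A // Id_on A) = card A"
  by (rule card_quotient_disjoint) (auto simp: inj_on_def quotient_def)

lemma equiv_total_if_card_quotient_le_1:
  assumes "finite A" "equiv A R" "card (A // R) \<le> 1"
  shows "R = A \<times> A"
proof -
  have "(a, b) \<in> R" if "a \<in> A" "b \<in> A" for a b
  proof -
    have "finite (A // R)"
      using assms(1,2) by (simp add: finite_quotient equiv_def)
    then have "R `` {a} = R `` {b}"
      using assms(3) that by (metis One_nat_def card_le_Suc0_iff_eq quotientI)
    then show ?thesis
      using assms(2) that by (metis eq_equiv_class_iff)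
  qed
  then show ?thesis
    using assms(2) by (auto simp: equiv_def refl_on_def)
qed

lemma rtrancl_enters_set:
  assumes "(s, t) \<in> E\<^sup>*" "s \<notin> T" "t \<in> T"
  shows "\<exists>u v. (u, v) \<in> E \<and> u \<notin> T \<and> v \<in> T"
  using assms by (induction rule: rtrancl_induct) auto

text \<open>A finite acyclic relation is well-founded, so some vertex would have no predecessor.\<close>

lemma cycle_if_all_have_predecessors:
  assumes "finite Q" "E \<subseteq> Q \<times> Q" "\<And>u. (u, u) \<notin> E"
    and "\<And>v. v \<in> Q \<Longrightarrow> \<exists>u. (u, v) \<in> E" "Q \<noteq> {}"
  shows "\<exists>u\<in>Q. \<exists>v\<in>Q. u \<noteq> v \<and> (u, v) \<in> E\<^sup>* \<and> (v, u) \<in> E\<^sup>*"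
proof -
  have "finite E"
    using assms(1,2) by (meson finite_SigmaI finite_subset)
  have "\<not> wf E"
  proof
    assume "wf E"
    then obtain z where "z \<in> Q" "\<And>u. (u, z) \<in> E \<Longrightarrow> u \<notin> Q"
      using assms(5) unfolding wf_eq_minimal by blast
    then show False
      using assms(2,4) by blast
  qed
  then obtain u where "(u, u) \<in> E\<^sup>+"
    using \<open>finite E\<close> finite_acyclic_wf unfolding acyclic_def by blast
  then obtain v where "(u, v) \<in> E" "(v, u) \<in> E\<^sup>*"
    by (meson tranclD)
  then show ?thesis
    using assms(2,3) by (metis SigmaD1 SigmaD2 r_into_rtrancl subsetD)
qed


subsection \<open>The permutation group of a finite automaton\<close>

locale finite_dfa =
  fixes Q :: "'q set" and Sig :: "'a set" and delta :: "'q \<Rightarrow> 'a \<Rightarrow> 'q"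
  assumes finite_Q: "finite Q"
    and delta_closed: "\<And>q s. q \<in> Q \<Longrightarrow> s \<in> Sig \<Longrightarrow> delta q s \<in> Q"
begin

definition perm_letters :: "'a set" where
  "perm_letters = {s \<in> Sig. permutation_letter Q delta s}"

definition perm_words :: "nat \<Rightarrow> 'a list set" where
  "perm_words m = {h. set h \<subseteq> perm_letters \<and> length h \<le> m}"

lemma perm_words_mono: "m \<le> m' \<Longrightarrow> perm_words m \<subseteq> perm_words m'"
  unfolding perm_words_def by auto

lemma perm_words_letters: "h \<in> perm_words m \<Longrightarrow> set h \<subseteq> Sig"
  unfolding perm_words_def perm_letters_def by auto

lemma snoc_in_perm_words: "h \<in> perm_words m \<Longrightarrow> s \<in> perm_letters \<Longrightarrow> h @ [s] \<in> perm_words (Suc m)"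
  unfolding perm_words_def by auto

lemma bij_betw_perm_letter: "s \<in> perm_letters \<Longrightarrow> bij_betw (\<lambda>q. delta q s) Q Q"
  unfolding perm_letters_def permutation_letter_def by auto

lemma delta_word_closed: "q \<in> Q \<Longrightarrow> set w \<subseteq> Sig \<Longrightarrow> delta_word delta q w \<in> Q"
  by (induction w arbitrary: q) (auto simp: delta_closed)

lemma bij_betw_perm_word: "h \<in> perm_words m \<Longrightarrow> bij_betw (\<lambda>q. delta_word delta q h) Q Q"
proof (induction h)
  case Nil
  then show ?case
    by (simp add: bij_betw_id[unfolded id_def])
next
  case (Cons s h)
  then have "bij_betw ((\<lambda>q. delta_word delta q h) \<circ> (\<lambda>q. delta q s)) Q Q"
    by (auto simp: perm_words_def intro: bij_betw_trans bij_betw_perm_letter)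
  then show ?case
    by (simp add: o_def)
qed

text \<open>The inverse of a permutation letter is handled by the finiteness of \<open>R\<close>: an injective
endomap of a finite set is onto.\<close>

lemma perm_group_gen_preserves_relation:
  assumes R: "R \<subseteq> Q \<times> Q"
    and closed: "\<And>s r t. s \<in> perm_letters \<Longrightarrow> (r, t) \<in> R \<Longrightarrow> (delta r s, delta t s) \<in> R"
    and "g \<in> perm_group_gen Q Sig delta" "(r, t) \<in> R"
  shows "(g r, g t) \<in> R"
  using assms(3,4)
proof (induction arbitrary: r t rule: perm_group_gen.induct)
  case gen_id
  then show ?case
    using R by auto
next
  case (gen_mult g s)
  then show ?case
    using R closed[of s "g r" "g t"] by (auto simp: perm_letters_def)
next
  case (gen_inv g s)
  then have s: "s \<in> perm_letters"
    by (simp add: perm_letters_def)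
  have rt: "r \<in> Q" "t \<in> Q" "(g r, g t) \<in> R"
    using gen_inv R by auto
  let ?inv = "the_inv_into Q (\<lambda>p. delta p s)"
  have bij: "bij_betw (\<lambda>p. delta p s) Q Q"
    using s by (rule bij_betw_perm_letter)
  have "g r \<in> Q" "g t \<in> Q"
    using rt R by auto
  then have inv: "?inv (g r) \<in> Q" "?inv (g t) \<in> Q"
    "delta (?inv (g r)) s = g r" "delta (?inv (g t)) s = g t"
    using bij
    by (auto simp: bij_betw_def the_inv_into_into intro!: f_the_inv_into_f[where f = "\<lambda>p. delta p s"])
  have "finite R"
    using R finite_Q by (meson finite_SigmaI finite_subset)
  moreover have "inj_on (\<lambda>(r, t). (delta r s, delta t s)) (Q \<times> Q)"
    using bij by (auto simp: bij_betw_def inj_on_def)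
  moreover have "(\<lambda>(r, t). (delta r s, delta t s)) ` R \<subseteq> R"
    using closed[OF s] by auto
  ultimately have "(?inv (g r), ?inv (g t)) \<in> R"
    using inj_endo_reflects_membership[of R "Q \<times> Q" "\<lambda>(r, t). (delta r s, delta t s)"] R inv rt(3)
    by simp
  then show ?case
    using rt by simp
qed

end

locale two_transitive_dfa = finite_dfa +
  assumes two_transitive: "two_transitive Q (perm_group_gen Q Sig delta)"
    and card_Q_ge_2: "2 \<le> card Q"
begin

lemma exists_other_state: "\<exists>u\<in>Q. u \<noteq> r"
proof (rule ccontr)
  assume "\<not> (\<exists>u\<in>Q. u \<noteq> r)"
  then have "Q \<subseteq> {r}"
    by blast
  then show False
    using card_Q_ge_2 card_mono[of "{r}" Q] by simp
qed

lemma perm_group_gen_transitive: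
  assumes "r \<in> Q" "r' \<in> Q"
  shows "\<exists>g\<in>perm_group_gen Q Sig delta. g r = r'"
proof -
  obtain u u' where "u \<in> Q" "u \<noteq> r" "u' \<in> Q" "u' \<noteq> r'"
    using exists_other_state by metis
  then show ?thesis
    using assms two_transitive unfolding two_transitive_def by blast
qed

lemma invariant_relation_contains_off_diagonal:
  assumes R: "R \<subseteq> Q \<times> Q"
    and closed: "\<And>s r t. s \<in> perm_letters \<Longrightarrow> (r, t) \<in> R \<Longrightarrow> (delta r s, delta t s) \<in> R"
    and "(r0, t0) \<in> R" "r0 \<noteq> t0" "r \<in> Q" "t \<in> Q" "r \<noteq> t"
  shows "(r, t) \<in> R"
proof -
  obtain g where "g \<in> perm_group_gen Q Sig delta" "g r0 = r" "g t0 = t"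
    using two_transitive assms(3-7) R unfolding two_transitive_def by blast
  then show ?thesis
    using perm_group_gen_preserves_relation[OF R closed] assms(3) by metis
qed

end


subsection \<open>The graph of images of a pair of states\<close>

locale state_pair = two_transitive_dfa Q Sig delta
  for Q :: "'q set" and Sig :: "'a set" and delta :: "'q \<Rightarrow> 'a \<Rightarrow> 'q" +
  fixes x y :: 'q
  assumes x_in_Q: "x \<in> Q" and y_in_Q: "y \<in> Q" and x_neq_y: "x \<noteq> y"
begin

definition orbit_upto :: "nat \<Rightarrow> 'q set" where
  "orbit_upto m = (\<lambda>h. delta_word delta x h) ` perm_words m"

definition pair_edges :: "nat \<Rightarrow> ('q \<times> 'q) set" where
  "pair_edges m = (\<lambda>h. (delta_word delta y h, delta_word delta x h)) ` perm_words m"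

definition mutually_reachable :: "nat \<Rightarrow> ('q \<times> 'q) set" where
  "mutually_reachable m =
     {(r, t). r \<in> Q \<and> t \<in> Q \<and> (r, t) \<in> (pair_edges m)\<^sup>* \<and> (t, r) \<in> (pair_edges m)\<^sup>*}"

lemma orbit_upto_subset: "orbit_upto m \<subseteq> Q"
  unfolding orbit_upto_def using delta_word_closed x_in_Q perm_words_letters by auto

text \<open>Once \<open>orbit_upto\<close> stops growing it is closed under the permutation letters,
hence under the group, hence it is all of \<open>Q\<close> by transitivity.\<close>

lemma orbit_upto_grows: "orbit_upto m = Q \<or> m + 1 \<le> card (orbit_upto m)"
proof (induction m)
  case 0
  have "perm_words 0 = {[]}"
    unfolding perm_words_def by auto
  then show ?case
    unfolding orbit_upto_def by simp
next
  case (Suc m)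
  have sub: "orbit_upto m \<subseteq> orbit_upto (Suc m)"
    unfolding orbit_upto_def using perm_words_mono[of m "Suc m"] by auto
  show ?case
  proof (cases "orbit_upto m = Q")
    case True
    then show ?thesis
      using sub orbit_upto_subset[of "Suc m"] by auto
  next
    case False
    have "orbit_upto (Suc m) \<noteq> orbit_upto m"
    proof
      assume eq: "orbit_upto (Suc m) = orbit_upto m"
      let ?X = "orbit_upto m"
      have closed: "delta r s \<in> ?X" if "s \<in> perm_letters" "r \<in> ?X" for s r
      proof -
        obtain h where "h \<in> perm_words m" "r = delta_word delta x h"
          using \<open>r \<in> ?X\<close> unfolding orbit_upto_def by auto
        then have "delta r s \<in> orbit_upto (Suc m)"
          unfolding orbit_upto_def using snoc_in_perm_words that(1)
          by (auto simp: delta_word_snoc intro!: image_eqI[where x = "h @ [s]"])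
        then show ?thesis
          using eq by simp
      qed
      have "x \<in> ?X"
        unfolding orbit_upto_def perm_words_def by (auto intro: image_eqI[where x = "[]"])
      have "Q \<subseteq> ?X"
      proof
        fix r
        assume "r \<in> Q"
        then obtain g where "g \<in> perm_group_gen Q Sig delta" "g x = r"
          using perm_group_gen_transitive x_in_Q by blast
        then show "r \<in> ?X"
          using perm_group_gen_preserves_relation[of "?X \<times> ?X"] orbit_upto_subset closed \<open>x \<in> ?X\<close>
          by blast
      qed
      then show False
        using False orbit_upto_subset by auto
    qed
    then have "orbit_upto m \<subset> orbit_upto (Suc m)"
      using sub by blast
    then have "card (orbit_upto m) < card (orbit_upto (Suc m))"
      using orbit_upto_subset finite_Q by (meson finite_subset psubset_card_mono)
    then show ?thesis
      using Suc False by simp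
  qed
qed

lemma orbit_upto_eq_Q: "orbit_upto (card Q - 1) = Q"
proof -
  have "card Q - 1 + 1 = card Q"
    using card_Q_ge_2 by simp
  then show ?thesis
    using orbit_upto_grows[of "card Q - 1"] orbit_upto_subset finite_Q by (metis card_seteq)
qed

lemma pair_edges_subset: "pair_edges m \<subseteq> Q \<times> Q"
  unfolding pair_edges_def using delta_word_closed x_in_Q y_in_Q perm_words_letters by auto

lemma pair_edges_irrefl: "(u, u) \<notin> pair_edges m"
proof
  assume "(u, u) \<in> pair_edges m"
  then obtain h where "h \<in> perm_words m" "delta_word delta y h = delta_word delta x h"
    unfolding pair_edges_def by auto
  then show False
    using bij_betw_perm_word x_in_Q y_in_Q x_neq_y unfolding bij_betw_def inj_on_def by metis
qed

lemma pair_edges_snoc: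
  assumes "s \<in> perm_letters" "(u, v) \<in> (pair_edges m)\<^sup>*"
  shows "(delta u s, delta v s) \<in> (pair_edges (Suc m))\<^sup>*"
  using assms(2)
proof (induction rule: rtrancl_induct)
  case base
  then show ?case
    by simp
next
  case (step v w)
  then obtain h where h: "h \<in> perm_words m" "v = delta_word delta y h" "w = delta_word delta x h"
    unfolding pair_edges_def by auto
  then have "(delta v s, delta w s) \<in> pair_edges (Suc m)"
    unfolding pair_edges_def using snoc_in_perm_words[OF h(1) assms(1)]
    by (auto simp: delta_word_snoc intro!: image_eqI[where x = "h @ [s]"])
  then show ?case
    using step by (meson rtrancl_into_rtrancl)
qed

lemma mutually_reachable_subset: "mutually_reachable m \<subseteq> Q \<times> Q"
  unfolding mutually_reachable_def by auto

lemma equiv_mutually_reachable: "equiv Q (mutually_reachable m)"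
  unfolding equiv_def refl_on_def sym_def trans_def mutually_reachable_def
  by (auto intro: rtrancl_trans)

lemma mutually_reachable_mono: "m \<le> m' \<Longrightarrow> mutually_reachable m \<subseteq> mutually_reachable m'"
  unfolding mutually_reachable_def pair_edges_def
  using rtrancl_mono[OF image_mono[OF perm_words_mono]] by blast

text \<open>Every state \<open>x\<cdot>h\<close> has the predecessor \<open>y\<cdot>h\<close>, so the graph has a cycle.\<close>

lemma mutually_reachable_nontrivial: "\<exists>r t. r \<noteq> t \<and> (r, t) \<in> mutually_reachable (card Q - 1)"
proof -
  have "\<exists>u. (u, v) \<in> pair_edges (card Q - 1)" if "v \<in> Q" for v
    using that orbit_upto_eq_Q unfolding orbit_upto_def pair_edges_def by blast
  then show ?thesis
    using cycle_if_all_have_predecessors[OF finite_Q pair_edges_subset pair_edges_irrefl] x_in_Q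
    unfolding mutually_reachable_def by blast
qed

lemma mutually_reachable_grows:
  assumes "(r0, t0) \<in> mutually_reachable m" "r0 \<noteq> t0" "mutually_reachable m \<noteq> Q \<times> Q"
  shows "mutually_reachable m \<subset> mutually_reachable (Suc m)"
proof -
  let ?R = "mutually_reachable m"
  have "?R \<noteq> mutually_reachable (Suc m)"
  proof
    assume eq: "?R = mutually_reachable (Suc m)"
    have closed: "(delta r s, delta t s) \<in> ?R" if "s \<in> perm_letters" "(r, t) \<in> ?R" for s r t
    proof -
      have "delta r s \<in> Q" "delta t s \<in> Q"
        using that delta_closed unfolding perm_letters_def mutually_reachable_def by auto
      then have "(delta r s, delta t s) \<in> mutually_reachable (Suc m)"
        using that pair_edges_snoc unfolding mutually_reachable_def by blast
      then show ?thesis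
        using eq by simp
    qed
    have "(r, t) \<in> ?R" if "r \<in> Q" "t \<in> Q" for r t
    proof (cases "r = t")
      case True
      then show ?thesis
        using that unfolding mutually_reachable_def by blast
    next
      case False
      then show ?thesis
        using invariant_relation_contains_off_diagonal[OF mutually_reachable_subset closed assms(1,2) that]
        by blast
    qed
    then show False
      using assms(3) mutually_reachable_subset by blast
  qed
  moreover have "?R \<subseteq> mutually_reachable (Suc m)"
    by (rule mutually_reachable_mono) simp
  ultimately show ?thesis
    by blast
qed

lemma mutually_reachable_classes:
  "mutually_reachable (card Q - 1 + k) = Q \<times> Q \<or>
    card (Q // mutually_reachable (card Q - 1 + k)) + k < card Q"
proof (induction k)
  case 0
  obtain r0 t0 where "r0 \<noteq> t0" "(r0, t0) \<in> mutually_reachable (card Q - 1)"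
    using mutually_reachable_nontrivial by blast
  then have "Id_on Q \<subset> mutually_reachable (card Q - 1)"
    unfolding mutually_reachable_def by auto
  moreover have "equiv Q (Id_on Q)"
    by (auto simp: equiv_def refl_on_def sym_def trans_def)
  ultimately have "card (Q // mutually_reachable (card Q - 1)) < card (Q // Id_on Q)"
    using card_quotient_less_if_refines[OF finite_Q _ equiv_mutually_reachable] by blast
  then show ?case
    using card_quotient_Id_on[OF finite_Q] by simp
next
  case (Suc k)
  let ?m = "card Q - 1 + k"
  have Suc_m: "card Q - 1 + Suc k = Suc ?m"
    by simp
  show ?case
  proof (cases "mutually_reachable ?m = Q \<times> Q")
    case True
    then show ?thesis
      unfolding Suc_m using mutually_reachable_mono[of ?m "Suc ?m"] mutually_reachable_subset by auto
  next
    case False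
    obtain r0 t0 where "r0 \<noteq> t0" "(r0, t0) \<in> mutually_reachable (card Q - 1)"
      using mutually_reachable_nontrivial by blast
    then have "mutually_reachable ?m \<subset> mutually_reachable (Suc ?m)"
      using mutually_reachable_mono[of "card Q - 1" ?m] False
      by (intro mutually_reachable_grows[of r0 t0]) auto
    then have "card (Q // mutually_reachable (Suc ?m)) < card (Q // mutually_reachable ?m)"
      by (intro card_quotient_less_if_refines[OF finite_Q equiv_mutually_reachable equiv_mutually_reachable])
    moreover have "card (Q // mutually_reachable ?m) + k < card Q"
      using Suc.IH False by blast
    ultimately show ?thesis
      unfolding Suc_m by linarith
  qed
qed

lemma mutually_reachable_total: "mutually_reachable (2 * card Q - 3) = Q \<times> Q"
proof -
  have "card Q - 1 + (card Q - 2) = 2 * card Q - 3"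
    using card_Q_ge_2 by simp
  then have "mutually_reachable (2 * card Q - 3) = Q \<times> Q \<or>
      card (Q // mutually_reachable (2 * card Q - 3)) \<le> 1"
    using mutually_reachable_classes[of "card Q - 2"] by auto
  then show ?thesis
    using equiv_total_if_card_quotient_le_1[OF finite_Q equiv_mutually_reachable] by blast
qed

lemma separating_perm_word:
  assumes "T \<subseteq> Q" "T \<noteq> {}" "T \<noteq> Q"
  shows "\<exists>h \<in> perm_words (2 * card Q - 3). delta_word delta x h \<in> T \<and> delta_word delta y h \<notin> T"
proof -
  obtain t s where t: "t \<in> T" and s: "s \<in> Q" "s \<notin> T"
    using assms by blast
  then have "(s, t) \<in> mutually_reachable (2 * card Q - 3)"
    using mutually_reachable_total assms(1) by auto
  then have "(s, t) \<in> (pair_edges (2 * card Q - 3))\<^sup>*"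
    unfolding mutually_reachable_def by simp
  then obtain u v where "(u, v) \<in> pair_edges (2 * card Q - 3)" "u \<notin> T" "v \<in> T"
    using rtrancl_enters_set[OF _ s(2) t] by blast
  then show ?thesis
    unfolding pair_edges_def by auto
qed

end


subsection \<open>Extending preimages with the letter of rank \<open>n - 1\<close>\<close>

locale collapsing_letter = state_pair Q Sig delta x y
  for Q :: "'q set" and Sig :: "'a set" and delta :: "'q \<Rightarrow> 'a \<Rightarrow> 'q" and x y +
  fixes a :: 'a and p q :: 'q
  assumes a_in_Sig: "a \<in> Sig"
    and image_a: "(\<lambda>r. delta r a) ` Q = Q - {y}"
    and collision: "p \<in> Q" "q \<in> Q" "p \<noteq> q" "delta p a = x" "delta q a = x"
begin

lemma preimage_word_extends:
  assumes "T \<subseteq> Q" "T \<noteq> {}" "T \<noteq> Q"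
  shows "\<exists>h. set h \<subseteq> Sig \<and> length h \<le> 2 * card Q - 2 \<and>
    card T < card (preimage_word Q delta h T)"
proof -
  obtain h where h: "h \<in> perm_words (2 * card Q - 3)"
      "delta_word delta x h \<in> T" "delta_word delta y h \<notin> T"
    using separating_perm_word assms by blast
  let ?T' = "preimage_word Q delta h T"
  have card_T': "card ?T' = card T"
    unfolding preimage_word_def using bij_betw_perm_word[OF h(1)] assms(1) by (rule card_vimage_bij_betw)
  have "?T' \<subseteq> (\<lambda>r. delta r a) ` Q"
    using h(3) image_a unfolding preimage_word_def by blast
  moreover have "x \<in> ?T'"
    using h(2) x_in_Q unfolding preimage_word_def by blast
  ultimately have "card ?T' < card {r \<in> Q. delta r a \<in> ?T'}"
    using card_less_card_vimage_if_collision[of Q ?T' "\<lambda>r. delta r a" p q] finite_Q collision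
    by simp
  moreover have "{r \<in> Q. delta r a \<in> ?T'} = preimage_word Q delta (a # h) T"
    unfolding preimage_word_def using a_in_Sig delta_closed by auto
  moreover have "length (a # h) \<le> 2 * card Q - 2" "set (a # h) \<subseteq> Sig"
    using h(1) card_Q_ge_2 a_in_Sig perm_words_letters unfolding perm_words_def by auto
  ultimately show ?thesis
    using card_T' by (intro exI[of _ "a # h"]) simp
qed

lemma large_preimage_word:
  "k + 2 \<le> card Q \<Longrightarrow>
    \<exists>w. set w \<subseteq> Sig \<and> length w \<le> 1 + k * (2 * card Q - 2) \<and> k + 2 \<le> card (preimage_word Q delta w {x})"
proof (induction k)
  case 0
  have "{p, q} \<subseteq> preimage_word Q delta [a] {x}"
    using collision unfolding preimage_word_def by auto
  moreover have "finite (preimage_word Q delta [a] {x})"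
    using finite_Q unfolding preimage_word_def by simp
  ultimately have "card {p, q} \<le> card (preimage_word Q delta [a] {x})"
    using card_mono by blast
  then have "2 \<le> card (preimage_word Q delta [a] {x})"
    using collision(3) by simp
  then show ?case
    using a_in_Sig by (intro exI[of _ "[a]"]) simp
next
  case (Suc k)
  then obtain w where w: "set w \<subseteq> Sig" "length w \<le> 1 + k * (2 * card Q - 2)"
      "k + 2 \<le> card (preimage_word Q delta w {x})"
    by auto
  let ?T = "preimage_word Q delta w {x}"
  show ?case
  proof (cases "Suc k + 2 \<le> card ?T")
    case True
    then show ?thesis
      using w by (intro exI[of _ w]) auto
  next
    case False
    have "?T \<subseteq> Q"
      unfolding preimage_word_def by blast
    moreover have "?T \<noteq> {}"
      using w(3) by auto
    moreover have "?T \<noteq> Q"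
      using False Suc.prems by auto
    ultimately obtain h where "set h \<subseteq> Sig" "length h \<le> 2 * card Q - 2"
        "card ?T < card (preimage_word Q delta h ?T)"
      using preimage_word_extends by blast
    moreover have "preimage_word Q delta (h @ w) {x} = preimage_word Q delta h ?T"
      using \<open>set h \<subseteq> Sig\<close> delta_word_closed by (intro preimage_word_append)
    moreover have "length (h @ w) \<le> 1 + Suc k * (2 * card Q - 2)"
      using \<open>length h \<le> 2 * card Q - 2\<close> w(2) by simp
    ultimately show ?thesis
      using w False by (intro exI[of _ "h @ w"]) auto
  qed
qed

lemma short_reset_word:
  "\<exists>w. set w \<subseteq> Sig \<and> length w \<le> 1 + (card Q - 2) * (2 * card Q - 2) \<and> image_word delta Q w = {x}"
proof -
  have n: "card Q - 2 + 2 = card Q"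
    using card_Q_ge_2 by simp
  then obtain w where w: "set w \<subseteq> Sig" "length w \<le> 1 + (card Q - 2) * (2 * card Q - 2)"
      "card Q - 2 + 2 \<le> card (preimage_word Q delta w {x})"
    using large_preimage_word[of "card Q - 2"] by auto
  have "preimage_word Q delta w {x} \<subseteq> Q"
    unfolding preimage_word_def by blast
  then have "preimage_word Q delta w {x} = Q"
    using card_seteq[OF finite_Q] w(3) n by metis
  then have "\<forall>q\<in>Q. delta_word delta q w = x"
    unfolding preimage_word_def by blast
  then have "image_word delta Q w = {x}"
    using x_in_Q unfolding image_word_def by auto
  then show ?thesis
    using w by blast
qed

end

lemma rank_pred_collision:
  assumes "finite Q" "f ` Q \<subseteq> Q" "card (f ` Q) = card Q - 1" "Q \<noteq> {}"
  obtains y p q where "y \<in> Q" "f ` Q = Q - {y}" "p \<in> Q" "q \<in> Q" "p \<noteq> q" "f p = f q"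
proof -
  have less: "card (f ` Q) < card Q"
    using assms by (simp add: card_gt_0_iff)
  then have "f ` Q \<noteq> Q"
    by auto
  then obtain y where y: "y \<in> Q" "y \<notin> f ` Q"
    using assms(2) by blast
  have "f ` Q = Q - {y}"
  proof (rule card_subset_eq)
    show "finite (Q - {y})" "f ` Q \<subseteq> Q - {y}"
      using assms(1,2) y(2) by auto
    show "card (f ` Q) = card (Q - {y})"
      using assms(1,3) y(1) by (simp add: card_Diff_singleton)
  qed
  moreover have "\<not> inj_on f Q"
    using less card_image by (metis less_irrefl)
  then obtain p q where "p \<in> Q" "q \<in> Q" "p \<noteq> q" "f p = f q"
    unfolding inj_on_def by blast
  ultimately show ?thesis
    using that y(1) by blast
qed

lemma reset_bound_closed_form: "2 \<le> (n::nat) \<Longrightarrow> 1 + (n - 2) * (2 * n - 2) = 2 * n ^ 2 + 5 - 6 * n"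
proof -
  assume "2 \<le> n"
  then obtain k where k: "n = k + 2"
    by (metis add.commute le_Suc_ex)
  show ?thesis
    unfolding k by (simp add: power2_eq_square algebra_simps)
qed

theorem mainTheorem8:
  fixes Q :: "'q set" and Sig :: "'a set" and delta :: "'q \<Rightarrow> 'a \<Rightarrow> 'q" and n :: nat
  assumes "dfa Q Sig delta"
    and "card Q = n" and "n \<ge> 2"
    and "\<exists>x\<in>Sig. letter_rank Q delta x = n - 1"
    and "two_transitive Q (perm_group_gen Q Sig delta)"
  shows "synchronizing Q Sig delta \<and>
         reset_threshold Q Sig delta \<le> 2 * n ^ 2 + 5 - 6 * n"
proof -
  have finite_Q: "finite Q" and closed: "\<And>q s. q \<in> Q \<Longrightarrow> s \<in> Sig \<Longrightarrow> delta q s \<in> Q"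
    using assms(1) unfolding dfa_def by auto
  obtain a where a: "a \<in> Sig" "card ((\<lambda>r. delta r a) ` Q) = card Q - 1"
    using assms(2,4) unfolding letter_rank_def by auto
  have "(\<lambda>r. delta r a) ` Q \<subseteq> Q" "Q \<noteq> {}"
    using closed a(1) assms(2,3) by auto
  then obtain y p q where yp: "y \<in> Q" "(\<lambda>r. delta r a) ` Q = Q - {y}" "p \<in> Q" "q \<in> Q"
      "p \<noteq> q" "delta p a = delta q a"
    using rank_pred_collision[OF finite_Q _ a(2)] by blast
  have "delta p a \<in> Q - {y}"
    using yp(2,3) by blast
  then interpret collapsing_letter Q Sig delta "delta p a" y a p q
    by unfold_locales (simp_all add: finite_Q closed assms(2,3,5) a(1) yp)
  obtain w where w: "set w \<subseteq> Sig" "length w \<le> 1 + (n - 2) * (2 * n - 2)"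
      "card (image_word delta Q w) = 1"
    using short_reset_word assms(2) by auto
  have "reset_threshold Q Sig delta \<le> length w"
    unfolding reset_threshold_def using w by (intro Least_le) blast
  then show ?thesis
    using w reset_bound_closed_form[OF assms(3)] unfolding synchronizing_def by auto
qed

end
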